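(* Let $\psi_0:\mathbb{R}\to\mathbb{R}$ be a càdlàg function with $\lim_{|x|\to\infty}x^{-2}\psi_0(x)=0$, and let $\bar c$, $a(\cdot)$ and $\mathcal{A}$ be as in the context. Then (i) $\mathrm{Supp}(d\bar c)\subseteq \mathcal{A}$; (ii) $\{y:\exists\, x \text{ with } a(x)=y\}\subseteq \mathrm{Supp}(d\bar c)$. Consequently, if $\{y:\exists\, x \text{ with } a(x)=y\}$ is closed, then $\mathrm{Supp}(d\bar c)=\mathcal{A}$.
   Context: For $x\in\mathbb{R}$, $a(x)$ is the largest maximizer of $y\mapsto \psi_0(y)\vee\psi_0(y-)-\tfrac12(y-x)^2$ over $y\in\mathbb{R}$, i.e. the supremum of the set of all $y$ at which this supremum is attained. The shock structure is $\mathcal{A}:=\overline{\{y\in\mathbb{R}: a(x)=y \text{ for some } x\in\mathbb{R}\}}$ (closure of the range of $a$). $\bar C:\mathbb{R}\to\mathbb{R}$ denotes the concave majorant of $x\mapsto \psi_0(x)-\tfrac12 x^2$, i.e. the minimal concave function with $\bar C(x)\ge (\psi_0(x)\vee\psi_0(x-))-\tfrac12x^2$ for all $x$; $\bar c$ is its right-continuous derivative, which is non-increasing, and $d\bar c$ is the associated Stieltjes measure; $\mathrm{Supp}(d\bar c)$ is its support. *)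

theory Defs
  imports "HOL-Analysis.Analysis"
begin

definition left_lim :: "(real \<Rightarrow> real) \<Rightarrow> real \<Rightarrow> real" where
  "left_lim f y = Lim (at_left y) f"

definition cadlag :: "(real \<Rightarrow> real) \<Rightarrow> bool" where
  "cadlag f \<longleftrightarrow> (\<forall>x. continuous (at_right x) f \<and> (\<exists>l. (f \<longlongrightarrow> l) (at_left x)))"

definition usc_version :: "(real \<Rightarrow> real) \<Rightarrow> real \<Rightarrow> real" where
  "usc_version f y = max (f y) (left_lim f y)"

definition amax :: "(real \<Rightarrow> real) \<Rightarrow> real \<Rightarrow> real" where
  "amax psi0 x = Sup {y. \<forall>z. usc_version psi0 z - (z - x)\<^sup>2 / 2
                             \<le> usc_version psi0 y - (y - x)\<^sup>2 / 2}"

definition shock_structure :: "(real \<Rightarrow> real) \<Rightarrow> real set" where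
  "shock_structure psi0 = closure (range (amax psi0))"

definition concave_majorant :: "(real \<Rightarrow> real) \<Rightarrow> real \<Rightarrow> real" where
  "concave_majorant g x = Inf {D x | D. concave_on UNIV D \<and> (\<forall>z. g z \<le> D z)}"

definition Cbar :: "(real \<Rightarrow> real) \<Rightarrow> real \<Rightarrow> real" where
  "Cbar psi0 = concave_majorant (\<lambda>x. usc_version psi0 x - x\<^sup>2 / 2)"

definition right_deriv :: "(real \<Rightarrow> real) \<Rightarrow> real \<Rightarrow> real" where
  "right_deriv f x = Lim (at_right 0) (\<lambda>h. (f (x + h) - f x) / h)"

definition cbar :: "(real \<Rightarrow> real) \<Rightarrow> real \<Rightarrow> real" where
  "cbar psi0 = right_deriv (Cbar psi0)"

text \<open>Support of the Stieltjes measure dc of a monotone right-continuous c: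
  y is in the support iff every open interval around y has nonzero dc-measure,
  i.e. c is not constant on any open neighbourhood of y.\<close>
definition stieltjes_support :: "(real \<Rightarrow> real) \<Rightarrow> real set" where
  "stieltjes_support c = {y. \<forall>e>0. \<not> (\<exists>k. \<forall>z\<in>{y - e<..<y + e}. c z = k)}"

end

theory Submission
  imports Defs
begin

text \<open>Write \<open>g z = \<psi>\<^sub>0\<^sup>*(z) - z\<^sup>2/2\<close> with \<open>\<psi>\<^sub>0\<^sup>*\<close> the upper semicontinuous version of \<open>\<psi>\<^sub>0\<close>,
  so that \<open>\<bar>C\<close> is the concave majorant of \<open>g\<close> and \<open>a(x)\<close> is the largest maximiser of
  \<open>g z + x z\<close>. The growth hypothesis makes \<open>g\<close> decay quadratically, so these maximisers exist
  and their set is compact. A maximiser \<open>z\<close> of \<open>g z + x z\<close> is a point where the line of slope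
  \<open>-x\<close> touches both \<open>g\<close> and \<open>\<bar>C\<close>. Hence if \<open>\<bar>c\<close> takes two different values on either side
  of a point, every maximiser for an intermediate slope lies in between, which gives (i). Conversely,
  since \<open>a(x)\<close> is the largest maximiser, \<open>g\<close> falls strictly below the touching line to the right
  of \<open>a(x)\<close>, and bending that line down yields a concave majorant lying strictly below it there;
  this is incompatible with \<open>\<bar>c\<close> being constant near \<open>a(x)\<close>, which gives (ii).\<close>

lemma concave_on_slope_le:
  fixes f :: "real \<Rightarrow> real"
  assumes f: "concave_on I f" and I: "x \<in> I" "y \<in> I" and t: "x < t" "t < y"
  shows "(f y - f x) / (y - x) \<le> (f t - f x) / (t - x)"
    and "(f y - f t) / (y - t) \<le> (f y - f x) / (y - x)"
proof -
  have g: "convex_on I (\<lambda>z. - f z)" using f by (simp add: concave_on_def)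
  have flip: "(a - b) / (c - d) = - ((a - b) / (d - c))" for a b c d :: real
    by (metis minus_diff_eq minus_divide_right)
  show "(f y - f x) / (y - x) \<le> (f t - f x) / (t - x)"
    using convex_on_slope_le(1)[OF g I t] by (simp add: flip[of _ _ x])
  show "(f y - f t) / (y - t) \<le> (f y - f x) / (y - x)"
    using convex_on_slope_le(2)[OF g I t] by (simp add: flip[of _ _ x] flip[of _ _ t])
qed

lemma right_deriv_concave_eq_Sup:
  fixes f :: "real \<Rightarrow> real"
  assumes f: "concave_on UNIV f"
  shows "right_deriv f s = (SUP h\<in>{0<..}. (f (s + h) - f s) / h)"
    and "bdd_above ((\<lambda>h. (f (s + h) - f s) / h) ` {0<..})"
proof -
  let ?q = "\<lambda>h. (f (s + h) - f s) / h"
  have left: "?q h \<le> (f s - f t) / (s - t)" if "0 < h" "t < s" for h t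
    using concave_on_slope_le[OF f, of t "s + h" s] that by simp
  show bdd: "bdd_above (?q ` {0<..})"
    using left[of _ "s - 1"] by (intro bdd_aboveI2) auto
  have "(?q \<longlongrightarrow> (SUP h\<in>{0<..}. ?q h)) (at_right 0)"
  proof (rule order_tendstoI)
    fix a assume "a < (SUP h\<in>{0<..}. ?q h)"
    then obtain h0 where h0: "h0 > 0" "a < ?q h0"
      using less_cSUP_iff[OF _ bdd] by auto
    have "?q h0 \<le> ?q h" if "0 < h" "h < h0" for h
      using concave_on_slope_le(1)[OF f, of s "s + h0" "s + h"] that by simp
    with h0 show "\<forall>\<^sub>F h in at_right 0. a < ?q h"
      unfolding eventually_at_right_field by (intro exI[of _ h0]) force
  next
    fix a assume "(SUP h\<in>{0<..}. ?q h) < a"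
    moreover have "?q h \<le> (SUP h\<in>{0<..}. ?q h)" if "h > 0" for h
      using bdd that by (intro cSUP_upper) auto
    ultimately show "\<forall>\<^sub>F h in at_right 0. ?q h < a"
      unfolding eventually_at_right_field by (intro exI[of _ 1]) force
  qed
  then show "right_deriv f s = (SUP h\<in>{0<..}. ?q h)"
    unfolding right_deriv_def by (intro tendsto_Lim) auto
qed

lemma concave_on_le_right_deriv_tangent:
  fixes f :: "real \<Rightarrow> real"
  assumes f: "concave_on UNIV f"
  shows "f t \<le> f s + right_deriv f s * (t - s)"
proof (cases t s rule: linorder_cases)
  case less
  have "right_deriv f s \<le> (f s - f t) / (s - t)"
    unfolding right_deriv_concave_eq_Sup(1)[OF f]
  proof (rule cSUP_least)
    fix h :: real assume "h \<in> {0<..}"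
    then show "(f (s + h) - f s) / h \<le> (f s - f t) / (s - t)"
      using concave_on_slope_le[OF f, of t "s + h" s] less by simp
  qed auto
  with less show ?thesis by (simp add: field_simps)
next
  case greater
  have "(f (s + (t - s)) - f s) / (t - s) \<le> right_deriv f s"
    unfolding right_deriv_concave_eq_Sup(1)[OF f]
    using right_deriv_concave_eq_Sup(2)[OF f] greater by (intro cSUP_upper) auto
  with greater show ?thesis by (simp add: field_simps)
qed simp

lemma right_deriv_concave_antimono:
  fixes f :: "real \<Rightarrow> real"
  assumes f: "concave_on UNIV f" and "s1 < s2"
  shows "right_deriv f s2 \<le> right_deriv f s1"
proof -
  have "f s2 \<le> f s1 + right_deriv f s1 * (s2 - s1)"
    and "f s1 \<le> f s2 + right_deriv f s2 * (s1 - s2)"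
    by (rule concave_on_le_right_deriv_tangent[OF f])+
  then have "0 \<le> (right_deriv f s1 - right_deriv f s2) * (s2 - s1)"
    by (simp add: algebra_simps)
  with \<open>s1 < s2\<close> show ?thesis by (simp add: zero_le_mult_iff)
qed

lemma concave_on_affine: "concave_on UNIV (\<lambda>z::real. a + b * z)"
  by (simp add: concave_on_iff algebra_simps) (metis distrib_left mult.commute mult_1 order_refl)

lemma concave_on_min:
  fixes f h :: "real \<Rightarrow> real"
  assumes "concave_on UNIV f" "concave_on UNIV h"
  shows "concave_on UNIV (\<lambda>z. min (f z) (h z))"
  using assms unfolding concave_on_iff by (smt (verit, ccfv_SIG) mult_left_mono)

definition upper_semicontinuous :: "(real \<Rightarrow> real) \<Rightarrow> bool" where
  "upper_semicontinuous f \<longleftrightarrow> (\<forall>y e. e > 0 \<longrightarrow> (\<exists>d>0. \<forall>z. \<bar>z - y\<bar> < d \<longrightarrow> f z < f y + e))"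

lemma upper_semicontinuous_open_sublevel:
  assumes "upper_semicontinuous f" shows "open {z. f z < c}"
  unfolding open_dist
proof safe
  fix x assume "f x < c"
  then obtain d where "d > 0" "\<forall>z. \<bar>z - x\<bar> < d \<longrightarrow> f z < f x + (c - f x)"
    using assms unfolding upper_semicontinuous_def by (meson diff_gt_0_iff_gt)
  then show "\<exists>e>0. \<forall>y. dist y x < e \<longrightarrow> y \<in> {z. f z < c}" by (auto simp: dist_real_def)
qed

lemma upper_semicontinuous_closed_superlevel:
  assumes "upper_semicontinuous f" shows "closed {z. c \<le> f z}"
proof -
  have "{z. c \<le> f z} = - {z. f z < c}" by auto
  then show ?thesis using upper_semicontinuous_open_sublevel[OF assms] by (simp add: closed_def)
qed

lemma upper_semicontinuous_attains_max:
  assumes u: "upper_semicontinuous f" and K: "compact K" "K \<noteq> {}"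
  shows "\<exists>x\<in>K. \<forall>z\<in>K. f z \<le> f x"
proof (rule ccontr)
  assume "\<not> ?thesis"
  then have "K \<subseteq> (\<Union>x\<in>K. {z. f z < f x})" by force
  with compactE_image[OF K(1) upper_semicontinuous_open_sublevel[OF u]] obtain C
    where C: "C \<subseteq> K" "finite C" "K \<subseteq> (\<Union>x\<in>C. {z. f z < f x})" by metis
  then have "C \<noteq> {}" using K(2) by auto
  with C have "Max (f ` C) \<in> f ` C" by (intro Max_in) auto
  then obtain x where x: "x \<in> C" "f x = Max (f ` C)" by auto
  with C have max: "\<forall>y\<in>C. f y \<le> f x" by simp
  obtain y where "y \<in> C" "f x < f y" using C x(1) by blast
  with max show False by force
qed

lemma upper_semicontinuous_add_continuous:
  assumes u: "upper_semicontinuous f" and h: "continuous_on UNIV h"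
  shows "upper_semicontinuous (\<lambda>z. f z + h z)"
  unfolding upper_semicontinuous_def
proof (intro allI impI)
  fix y e :: real assume e: "e > 0"
  obtain d1 where d1: "d1 > 0" "\<forall>z. \<bar>z - y\<bar> < d1 \<longrightarrow> f z < f y + e / 2"
    using u e unfolding upper_semicontinuous_def by (meson half_gt_zero)
  obtain d2 where d2: "d2 > 0" "\<forall>z. dist z y < d2 \<longrightarrow> dist (h z) (h y) < e / 2"
    using h e unfolding continuous_on_iff by (meson UNIV_I half_gt_zero)
  show "\<exists>d>0. \<forall>z. \<bar>z - y\<bar> < d \<longrightarrow> f z + h z < f y + h y + e"
  proof (intro exI[of _ "min d1 d2"] conjI allI impI)
    fix z assume "\<bar>z - y\<bar> < min d1 d2"
    then have "f z < f y + e / 2" "\<bar>h z - h y\<bar> < e / 2"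
      using d1 d2 by (auto simp: dist_real_def)
    then show "f z + h z < f y + h y + e" by linarith
  qed (use d1 d2 in simp)
qed

lemma upper_semicontinuous_add_linear:
  assumes "upper_semicontinuous f" shows "upper_semicontinuous (\<lambda>z. f z + x * z)"
  using upper_semicontinuous_add_continuous[OF assms, of "\<lambda>z. x * z"] by (simp add: continuous_on_mult_left)

lemma concave_majorant_le:
  fixes g D :: "real \<Rightarrow> real"
  assumes "concave_on UNIV D" "\<forall>z. g z \<le> D z"
  shows "concave_majorant g x \<le> D x"
  unfolding concave_majorant_def using assms
  by (intro cInf_lower bdd_belowI[of _ "g x"]) auto

lemma concave_majorants_nonempty:
  fixes g :: "real \<Rightarrow> real"
  assumes "bdd_above (range g)"
  shows "{D x | D. concave_on UNIV D \<and> (\<forall>z. g z \<le> D z)} \<noteq> {}"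
proof -
  obtain C where "\<forall>z. g z \<le> C" using assms by (auto simp: bdd_above_def)
  then have "(\<lambda>z. C + 0 * z) x \<in> {D x | D. concave_on UNIV D \<and> (\<forall>z. g z \<le> D z)}"
    using concave_on_affine by fastforce
  then show ?thesis by blast
qed

lemma concave_majorant_ge:
  fixes g :: "real \<Rightarrow> real"
  assumes "bdd_above (range g)"
  shows "g x \<le> concave_majorant g x"
  unfolding concave_majorant_def
  using concave_majorants_nonempty[OF assms] by (intro cInf_greatest) auto

lemma concave_on_concave_majorant:
  fixes g :: "real \<Rightarrow> real"
  assumes bdd: "bdd_above (range g)"
  shows "concave_on UNIV (concave_majorant g)"
  unfolding concave_on_iff
proof (intro conjI ballI allI impI)
  fix x y u v :: real
  assume uv: "0 \<le> u" "0 \<le> v" "u + v = 1"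
  show "u * concave_majorant g x + v * concave_majorant g y \<le> concave_majorant g (u *\<^sub>R x + v *\<^sub>R y)"
    unfolding concave_majorant_def[of g "u *\<^sub>R x + v *\<^sub>R y"]
  proof (rule cInf_greatest[OF concave_majorants_nonempty[OF bdd]], safe)
    fix D :: "real \<Rightarrow> real" assume D: "concave_on UNIV D" "\<forall>z. g z \<le> D z"
    have "u * concave_majorant g x + v * concave_majorant g y \<le> u * D x + v * D y"
      using concave_majorant_le[OF D] uv by (intro add_mono mult_left_mono) auto
    also have "\<dots> \<le> D (u *\<^sub>R x + v *\<^sub>R y)" using D(1) uv unfolding concave_on_iff by auto
    finally show "u * concave_majorant g x + v * concave_majorant g y \<le> D (u *\<^sub>R x + v *\<^sub>R y)" .
  qed
qed simp

definition has_quadratic_decay :: "(real \<Rightarrow> real) \<Rightarrow> bool" where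
  "has_quadratic_decay g \<longleftrightarrow> (\<exists>C. \<forall>z. g z \<le> C - z\<^sup>2 / 4)"

lemma has_quadratic_decay_bdd_above:
  assumes "has_quadratic_decay g" shows "bdd_above (range g)"
proof -
  obtain C where C: "\<forall>z. g z \<le> C - z\<^sup>2 / 4" using assms unfolding has_quadratic_decay_def by blast
  have "g z \<le> C" for z using C[rule_format, of z] zero_le_power2[of z] by linarith
  then show ?thesis by (rule bdd_aboveI2)
qed

lemma has_quadratic_decay_tilted_coercive:
  fixes g :: "real \<Rightarrow> real"
  assumes "has_quadratic_decay g"
  shows "\<exists>R>0. \<forall>z. \<bar>z\<bar> \<ge> R \<longrightarrow> g z + x * z + \<bar>z\<bar> < K"
proof -
  obtain C where gb: "\<forall>z. g z \<le> C - z\<^sup>2 / 4" using assms unfolding has_quadratic_decay_def by blast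
  define R where "R = max 1 (8 * (C + 4 * x\<^sup>2 + 4 - K) + 1)"
  show ?thesis
  proof (intro exI[of _ R] conjI allI impI)
    fix z assume z: "\<bar>z\<bar> \<ge> R"
    then have "\<bar>z\<bar> * 1 \<le> \<bar>z\<bar> * \<bar>z\<bar>" unfolding R_def by (intro mult_left_mono) auto
    then have "R \<le> z\<^sup>2" using z by (simp add: power2_eq_square)
    moreover have "x * z \<le> z\<^sup>2 / 16 + 4 * x\<^sup>2"
      using zero_le_power2[of "z / 4 - 2 * x"] unfolding power2_eq_square by (simp add: algebra_simps)
    moreover have "\<bar>z\<bar> \<le> z\<^sup>2 / 16 + 4"
      using zero_le_power2[of "\<bar>z\<bar> / 4 - 2"] unfolding power2_eq_square by (simp add: algebra_simps)
    ultimately have "g z + x * z + \<bar>z\<bar> \<le> C + 4 * x\<^sup>2 + 4 - R / 8"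
      using gb[rule_format, of z] by linarith
    also have "\<dots> < K" by (simp add: R_def field_simps)
    finally show "g z + x * z + \<bar>z\<bar> < K" .
  qed (simp add: R_def)
qed

definition tilted_argmax :: "(real \<Rightarrow> real) \<Rightarrow> real \<Rightarrow> real set" where
  "tilted_argmax g x = {y. \<forall>z. g z + x * z \<le> g y + x * y}"

lemma bdd_above_tilted_argmax:
  assumes "has_quadratic_decay g" shows "bdd_above (tilted_argmax g x)"
proof -
  obtain R where R: "\<forall>z. \<bar>z\<bar> \<ge> R \<longrightarrow> g z + x * z + \<bar>z\<bar> < g 0"
    using has_quadratic_decay_tilted_coercive[OF assms] by blast
  have "y \<le> R" if "y \<in> tilted_argmax g x" for y
  proof (rule ccontr)
    assume "\<not> y \<le> R"
    then have "g y + x * y + \<bar>y\<bar> < g 0" using R[rule_format, of y] by simp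
    moreover have "g 0 + x * 0 \<le> g y + x * y" using that unfolding tilted_argmax_def by blast
    ultimately show False by simp
  qed
  then show ?thesis by (intro bdd_aboveI)
qed

lemma tilted_argmax_nonempty:
  assumes u: "upper_semicontinuous g" and decay: "has_quadratic_decay g"
  shows "tilted_argmax g x \<noteq> {}"
proof -
  obtain R where R: "R > 0" "\<forall>z. \<bar>z\<bar> \<ge> R \<longrightarrow> g z + x * z + \<bar>z\<bar> < g 0"
    using has_quadratic_decay_tilted_coercive[OF decay] by blast
  obtain y where y: "y \<in> {-R..R}" "\<forall>z\<in>{-R..R}. g z + x * z \<le> g y + x * y"
    using upper_semicontinuous_attains_max[OF upper_semicontinuous_add_linear[OF u, of x], of "{-R..R}"] R(1)
    by auto
  have "g z + x * z \<le> g y + x * y" for z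
  proof (cases "\<bar>z\<bar> \<ge> R")
    case True
    then have "g z + x * z < g 0 + x * 0" using R(2)[rule_format, OF True] by simp
    also have "\<dots> \<le> g y + x * y" using y(2)[rule_format, of 0] R(1) by simp
    finally show ?thesis by simp
  next
    case False
    then have "z \<in> {-R..R}" by (simp add: abs_less_iff less_imp_le)
    then show ?thesis using y(2) by blast
  qed
  then show ?thesis unfolding tilted_argmax_def by blast
qed

lemma Sup_tilted_argmax_mem:
  assumes u: "upper_semicontinuous g" and decay: "has_quadratic_decay g"
  shows "Sup (tilted_argmax g x) \<in> tilted_argmax g x"
proof -
  obtain y where y: "y \<in> tilted_argmax g x" using tilted_argmax_nonempty[OF assms] by blast
  then have below: "g w + x * w \<le> g y + x * y" for w by (simp add: tilted_argmax_def)
  have eq: "tilted_argmax g x = {z. g y + x * y \<le> g z + x * z}"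
    unfolding tilted_argmax_def using below by (blast intro: order_trans)
  have "closed (tilted_argmax g x)"
    unfolding eq
    by (rule upper_semicontinuous_closed_superlevel[OF upper_semicontinuous_add_linear[OF u, of x]])
  then show ?thesis
    using y bdd_above_tilted_argmax[OF decay] by (intro closed_contains_Sup) auto
qed

lemma concave_on_supergradient_right_deriv:
  fixes f :: "real \<Rightarrow> real"
  assumes f: "concave_on UNIV f" and super: "\<forall>w. f w \<le> f z + k * (w - z)"
  shows "s < z \<Longrightarrow> k \<le> right_deriv f s"
    and "z < s \<Longrightarrow> right_deriv f s \<le> k"
proof -
  have "f z \<le> f s + right_deriv f s * (z - s)" by (rule concave_on_le_right_deriv_tangent[OF f])
  moreover have "f s \<le> f z + k * (s - z)" using super by blast
  ultimately have "0 \<le> (right_deriv f s - k) * (z - s)" by (simp add: algebra_simps)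
  then show "s < z \<Longrightarrow> k \<le> right_deriv f s" and "z < s \<Longrightarrow> right_deriv f s \<le> k"
    by (simp_all add: zero_le_mult_iff)
qed

lemma concave_majorant_supergradient_tilted_argmax:
  fixes g :: "real \<Rightarrow> real"
  assumes bdd: "bdd_above (range g)" and z: "z \<in> tilted_argmax g x"
  shows "concave_majorant g w \<le> concave_majorant g z + (- x) * (w - z)"
proof -
  have "\<forall>v. g v \<le> (g z + x * z) + (- x) * v" using z by (simp add: tilted_argmax_def algebra_simps)
  then have "concave_majorant g w \<le> (g z + x * z) + (- x) * w"
    by (rule concave_majorant_le[OF concave_on_affine])
  moreover have "g z \<le> concave_majorant g z" by (rule concave_majorant_ge[OF bdd])
  ultimately show ?thesis by (simp add: algebra_simps)
qed

lemma stieltjes_support_right_deriv_concave_majorant_subset: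
  fixes g :: "real \<Rightarrow> real"
  assumes u: "upper_semicontinuous g" and decay: "has_quadratic_decay g"
  shows "stieltjes_support (right_deriv (concave_majorant g))
    \<subseteq> closure (range (\<lambda>x. Sup (tilted_argmax g x)))"
proof
  fix y assume y: "y \<in> stieltjes_support (right_deriv (concave_majorant g))"
  let ?c = "right_deriv (concave_majorant g)"
  have bdd: "bdd_above (range g)" by (rule has_quadratic_decay_bdd_above[OF decay])
  note cc = concave_on_concave_majorant[OF bdd]
  show "y \<in> closure (range (\<lambda>x. Sup (tilted_argmax g x)))"
    unfolding closure_approachable
  proof (intro allI impI)
    fix e :: real assume "e > 0"
    then obtain s where s: "s \<in> {y - e<..<y + e}" "?c s \<noteq> ?c y"
      using y unfolding stieltjes_support_def by blast
    define s1 where "s1 = min s y"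
    define s2 where "s2 = max s y"
    have "s \<noteq> y" using s(2) by blast
    then have "s1 < s2" "?c s1 \<noteq> ?c s2"
      using s(2) unfolding s1_def s2_def by (auto simp: min_def max_def)
    then have c12: "?c s2 < ?c s1" using right_deriv_concave_antimono[OF cc] by force
    define k where "k = (?c s1 + ?c s2) / 2"
    define z where "z = Sup (tilted_argmax g (- k))"
    have super: "\<forall>w. concave_majorant g w \<le> concave_majorant g z + k * (w - z)"
      using concave_majorant_supergradient_tilted_argmax[OF bdd Sup_tilted_argmax_mem[OF u decay, of "- k"]]
      unfolding z_def by simp
    have "\<not> s2 < z"
      using concave_on_supergradient_right_deriv(1)[OF cc super, of s2] c12 by (auto simp: k_def)
    moreover have "\<not> z < s1"
      using concave_on_supergradient_right_deriv(2)[OF cc super, of s1] c12 by (auto simp: k_def)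
    ultimately have "dist z y < e"
      using s(1) unfolding s1_def s2_def dist_real_def by (auto simp: min_def max_def split: if_splits)
    then show "\<exists>w\<in>range (\<lambda>x. Sup (tilted_argmax g x)). dist w y < e" unfolding z_def by blast
  qed
qed

lemma tilted_strict_decrease_beyond_Sup_argmax:
  fixes g :: "real \<Rightarrow> real" and x \<delta> :: real
  assumes u: "upper_semicontinuous g" and decay: "has_quadratic_decay g" and "\<delta> > 0"
  defines "y \<equiv> Sup (tilted_argmax g x)"
  shows "\<exists>\<beta>>0. \<forall>z\<ge>y + \<delta>. g z + x * z \<le> g y + x * y - \<beta> * (z - y)"
proof -
  define m where "m = g y + x * y"
  have max: "g z + x * z \<le> m" for z
    using Sup_tilted_argmax_mem[OF u decay, of x] unfolding y_def m_def tilted_argmax_def by blast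
  obtain R where R: "\<forall>z. \<bar>z\<bar> \<ge> R \<longrightarrow> g z + x * z + \<bar>z\<bar> < m - \<bar>y\<bar>"
    using has_quadratic_decay_tilted_coercive[OF decay] by blast
  define R' where "R' = max R (y + \<delta> + 1)"
  have R'y: "y + \<delta> < R'" unfolding R'_def by simp
  obtain z0 where z0: "z0 \<in> {y + \<delta>..R'}" "\<forall>z\<in>{y + \<delta>..R'}. g z + x * z \<le> g z0 + x * z0"
    using upper_semicontinuous_attains_max[OF upper_semicontinuous_add_linear[OF u, of x],
        of "{y + \<delta>..R'}"] R'y
    by auto
  have "g z0 + x * z0 < m"
  proof (rule ccontr)
    assume "\<not> g z0 + x * z0 < m"
    then have "z0 \<in> tilted_argmax g x"
      using max unfolding tilted_argmax_def m_def by (smt (verit) mem_Collect_eq)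
    then have "z0 \<le> y"
      unfolding y_def using bdd_above_tilted_argmax[OF decay] by (rule cSup_upper)
    then show False using z0(1) \<open>\<delta> > 0\<close> by auto
  qed
  then obtain m0 where m0: "m0 > 0" "\<forall>z\<in>{y + \<delta>..R'}. g z + x * z \<le> m - m0"
    using z0(2) by (intro that[of "m - (g z0 + x * z0)"]) auto
  define \<beta> where "\<beta> = min 1 (m0 / (R' - y))"
  have \<beta>: "\<beta> > 0" "\<beta> \<le> 1" "\<beta> * (R' - y) \<le> m0"
    using m0 R'y \<open>\<delta> > 0\<close> by (auto simp: \<beta>_def min_def field_simps)
  have "g z + x * z \<le> m - \<beta> * (z - y)" if zy: "z \<ge> y + \<delta>" for z
  proof (cases "z \<ge> R'")
    case True
    then have "g z + x * z + \<bar>z\<bar> < m - \<bar>y\<bar>" using R unfolding R'_def by auto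
    then have "g z + x * z \<le> m - (z - y)" by linarith
    moreover have "\<beta> * (z - y) \<le> 1 * (z - y)" using \<beta> zy \<open>\<delta> > 0\<close> by (intro mult_right_mono) auto
    ultimately show ?thesis by simp
  next
    case False
    then have "\<beta> * (z - y) \<le> \<beta> * (R' - y)" using \<beta> by (intro mult_left_mono) auto
    with False zy m0(2) \<beta>(3) show ?thesis by force
  qed
  with \<beta>(1) show ?thesis unfolding m_def by blast
qed

lemma concave_majorant_less_tangent_right_of_Sup_argmax:
  fixes g :: "real \<Rightarrow> real" and x t :: real
  assumes u: "upper_semicontinuous g" and decay: "has_quadratic_decay g" and "t > 0"
  defines "y \<equiv> Sup (tilted_argmax g x)"
  shows "concave_majorant g (y + t) < g y + x * y - x * (y + t)"
proof -
  let ?L = "\<lambda>w. g y + x * y - x * w"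
  obtain \<beta> where \<beta>: "\<beta> > 0" "\<forall>z\<ge>y + t / 2. g z + x * z \<le> g y + x * y - \<beta> * (z - y)"
    using tilted_strict_decrease_beyond_Sup_argmax[OF u decay, of "t / 2" x] \<open>t > 0\<close>
    unfolding y_def by auto
  define D where "D = (\<lambda>w. min (?L w) (?L w + \<beta> * (t / 2) - \<beta> * (w - y)))"
  have "concave_on UNIV D"
    unfolding D_def using concave_on_min[OF concave_on_affine concave_on_affine,
      of "g y + x * y" "- x" "g y + x * y + \<beta> * (t / 2) + \<beta> * y" "- x - \<beta>"]
    by (simp add: algebra_simps)
  moreover have "\<forall>w. g w \<le> D w"
  proof
    fix w
    have "y \<in> tilted_argmax g x" unfolding y_def by (rule Sup_tilted_argmax_mem[OF u decay])
    then have "g w \<le> ?L w" unfolding tilted_argmax_def by (simp add: algebra_simps)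
    moreover have "g w \<le> ?L w + \<beta> * (t / 2) - \<beta> * (w - y)"
    proof (cases "w \<ge> y + t / 2")
      case True
      then have "g w + x * w \<le> g y + x * y - \<beta> * (w - y)" using \<beta>(2) by blast
      moreover have "0 \<le> \<beta> * (t / 2)" using \<beta>(1) \<open>t > 0\<close> by simp
      ultimately show ?thesis by (simp add: algebra_simps)
    next
      case False
      then have "\<beta> * (w - y) \<le> \<beta> * (t / 2)" using \<beta>(1) by (intro mult_left_mono) auto
      with \<open>g w \<le> ?L w\<close> show ?thesis by simp
    qed
    ultimately show "g w \<le> D w" unfolding D_def by simp
  qed
  ultimately have "concave_majorant g (y + t) \<le> D (y + t)" by (rule concave_majorant_le)
  also have "\<dots> < ?L (y + t)" using \<beta>(1) \<open>t > 0\<close> by (simp add: D_def algebra_simps)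
  finally show ?thesis .
qed

lemma Sup_tilted_argmax_in_stieltjes_support:
  fixes g :: "real \<Rightarrow> real"
  assumes u: "upper_semicontinuous g" and decay: "has_quadratic_decay g"
  shows "Sup (tilted_argmax g x) \<in> stieltjes_support (right_deriv (concave_majorant g))"
  unfolding stieltjes_support_def
proof (intro CollectI allI impI notI)
  fix e :: real assume "e > 0"
  define y where "y = Sup (tilted_argmax g x)"
  let ?C = "concave_majorant g"
  assume "\<exists>k. \<forall>z\<in>{Sup (tilted_argmax g x) - e<..<Sup (tilted_argmax g x) + e}. right_deriv ?C z = k"
  then obtain k where k: "right_deriv ?C (y - e / 2) = k" "right_deriv ?C (y + e / 2) = k"
    unfolding y_def using \<open>e > 0\<close> by force
  have bdd: "bdd_above (range g)" by (rule has_quadratic_decay_bdd_above[OF decay])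
  note cc = concave_on_concave_majorant[OF bdd]
  have yM: "y \<in> tilted_argmax g x" unfolding y_def by (rule Sup_tilted_argmax_mem[OF u decay])
  have "\<forall>w. ?C w \<le> ?C y + (- x) * (w - y)"
    using concave_majorant_supergradient_tilted_argmax[OF bdd yM] by blast
  then have "- x \<le> k"
    using concave_on_supergradient_right_deriv(1)[OF cc, of y "- x" "y - e / 2"] k \<open>e > 0\<close> by simp
  then have "(- x) * (e / 2) \<le> k * (e / 2)" using \<open>e > 0\<close> by (intro mult_right_mono) auto
  moreover have "?C y \<le> ?C (y + e / 2) + k * (y - (y + e / 2))"
    by (rule concave_on_le_right_deriv_tangent[OF cc, of y "y + e / 2", unfolded k])
  moreover have "g y \<le> ?C y" by (rule concave_majorant_ge[OF bdd])
  ultimately have "g y + x * y - x * (y + e / 2) \<le> ?C (y + e / 2)"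
    by (simp add: algebra_simps)
  moreover have "?C (y + e / 2) < g y + x * y - x * (y + e / 2)"
    using concave_majorant_less_tangent_right_of_Sup_argmax[OF u decay, of "e / 2" x] \<open>e > 0\<close>
    unfolding y_def by simp
  ultimately show False by simp
qed

lemma left_lim_eq:
  assumes "(f \<longlongrightarrow> l) (at_left (z::real))" shows "left_lim f z = l"
  unfolding left_lim_def using assms by (intro tendsto_Lim) auto

lemma cadlag_tendsto_left_lim:
  assumes "cadlag f" shows "(f \<longlongrightarrow> left_lim f z) (at_left z)"
proof -
  obtain l where "(f \<longlongrightarrow> l) (at_left z)" using assms unfolding cadlag_def by blast
  with left_lim_eq show ?thesis by metis
qed

lemma cadlag_tendsto_right:
  assumes "cadlag f" shows "(f \<longlongrightarrow> f z) (at_right z)"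
  using assms unfolding cadlag_def continuous_within by blast

lemma usc_version_le_on_interval:
  assumes f: "cadlag f" and B: "\<forall>w\<in>{a<..<b}. f w \<le> B" and z: "z \<in> {a<..<b}"
  shows "usc_version f z \<le> B"
proof -
  have "\<forall>\<^sub>F w in at_left z. f w \<le> B"
    unfolding eventually_at_left_field using B z by (intro exI[of _ a]) auto
  then have "left_lim f z \<le> B"
    by (intro tendsto_upperbound[OF cadlag_tendsto_left_lim[OF f]]) auto
  with B z show ?thesis unfolding usc_version_def by simp
qed

lemma upper_semicontinuous_usc_version:
  assumes f: "cadlag f" shows "upper_semicontinuous (usc_version f)"
  unfolding upper_semicontinuous_def
proof (intro allI impI)
  fix y e :: real assume "e > 0"
  have "\<forall>\<^sub>F w in at_right y. f w < f y + e / 2"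
    using order_tendstoD(2)[OF cadlag_tendsto_right[OF f]] \<open>e > 0\<close> by simp
  then obtain b1 where b1: "y < b1" "\<forall>w\<in>{y<..<b1}. f w \<le> f y + e / 2"
    unfolding eventually_at_right_field by (force intro: less_imp_le)
  have "\<forall>\<^sub>F w in at_left y. f w < left_lim f y + e / 2"
    using order_tendstoD(2)[OF cadlag_tendsto_left_lim[OF f]] \<open>e > 0\<close> by simp
  then obtain b2 where b2: "b2 < y" "\<forall>w\<in>{b2<..<y}. f w \<le> left_lim f y + e / 2"
    unfolding eventually_at_left_field by (force intro: less_imp_le)
  have top: "f y \<le> usc_version f y" "left_lim f y \<le> usc_version f y"
    unfolding usc_version_def by auto
  show "\<exists>d>0. \<forall>z. \<bar>z - y\<bar> < d \<longrightarrow> usc_version f z < usc_version f y + e"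
  proof (intro exI[of _ "min (b1 - y) (y - b2)"] conjI allI impI)
    fix z assume z: "\<bar>z - y\<bar> < min (b1 - y) (y - b2)"
    consider "z = y" | "z \<in> {y<..<b1}" | "z \<in> {b2<..<y}" using z by fastforce
    then show "usc_version f z < usc_version f y + e"
    proof cases
      case 2
      then show ?thesis using usc_version_le_on_interval[OF f b1(2)] top \<open>e > 0\<close> by fastforce
    next
      case 3
      then show ?thesis using usc_version_le_on_interval[OF f b2(2)] top \<open>e > 0\<close> by fastforce
    qed (use \<open>e > 0\<close> in simp)
  qed (use b1 b2 in simp)
qed

lemma has_quadratic_decay_usc_version:
  fixes f :: "real \<Rightarrow> real"
  assumes f: "cadlag f" and lim: "((\<lambda>x. f x / x\<^sup>2) \<longlongrightarrow> 0) at_infinity"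
  shows "has_quadratic_decay (\<lambda>z. usc_version f z - z\<^sup>2 / 2)"
proof -
  have "\<forall>\<^sub>F x in at_infinity. f x / x\<^sup>2 < 1 / 8"
    using order_tendstoD(2)[OF lim, of "1 / 8"] by simp
  then obtain b where b: "\<forall>x. norm x \<ge> b \<longrightarrow> f x / x\<^sup>2 < 1 / 8"
    unfolding eventually_at_infinity by blast
  define R where "R = max b 1"
  have far: "f w \<le> w\<^sup>2 / 8" if "\<bar>w\<bar> \<ge> R" for w
  proof -
    have "w\<^sup>2 > 0" using that unfolding R_def by auto
    moreover have "f w / w\<^sup>2 < 1 / 8" using b that unfolding R_def by auto
    ultimately show ?thesis by (simp add: divide_simps)
  qed
  obtain x0 where x0: "\<forall>z\<in>{-(R + 1)..R + 1}. usc_version f z \<le> usc_version f x0"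
    using upper_semicontinuous_attains_max[OF upper_semicontinuous_usc_version[OF f], of "{-(R + 1)..R + 1}"] unfolding R_def by auto
  define C where "C = max (usc_version f x0) (1 / 4)"
  have bound: "usc_version f z \<le> C + z\<^sup>2 / 4" for z
  proof (cases "\<bar>z\<bar> \<le> R + 1")
    case True
    then have "usc_version f z \<le> usc_version f x0" using x0 by (simp add: abs_le_iff)
    moreover have "usc_version f x0 \<le> C" by (simp add: C_def)
    ultimately show ?thesis using zero_le_power2[of z] by linarith
  next
    case False
    have "f w \<le> C + z\<^sup>2 / 4" if "w \<in> {z - 1<..<z + 1}" for w
    proof -
      have "\<bar>w\<bar> \<ge> R" "\<bar>w\<bar> \<le> \<bar>z\<bar> + 1" using False that by auto
      then have "f w \<le> w\<^sup>2 / 8" "w\<^sup>2 \<le> (\<bar>z\<bar> + 1)\<^sup>2"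
        using far power_mono[of "\<bar>w\<bar>" "\<bar>z\<bar> + 1" 2] by auto
      moreover have "(\<bar>z\<bar> + 1)\<^sup>2 \<le> 2 * z\<^sup>2 + 2"
        using zero_le_power2[of "\<bar>z\<bar> - 1"] unfolding power2_eq_square by (simp add: algebra_simps)
      moreover have "1 / 4 \<le> C" by (simp add: C_def)
      ultimately show ?thesis by linarith
    qed
    then show ?thesis by (intro usc_version_le_on_interval[OF f, of "z - 1" "z + 1"]) auto
  qed
  have "usc_version f z - z\<^sup>2 / 2 \<le> C - z\<^sup>2 / 4" for z using bound[of z] by linarith
  then show ?thesis unfolding has_quadratic_decay_def by blast
qed

lemma amax_eq_Sup_tilted_argmax:
  "amax psi0 x = Sup (tilted_argmax (\<lambda>z. usc_version psi0 z - z\<^sup>2 / 2) x)"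
proof -
  have shift: "usc_version psi0 z - (z - x)\<^sup>2 / 2 = (usc_version psi0 z - z\<^sup>2 / 2 + x * z) - x\<^sup>2 / 2"
    for z by (simp add: power2_eq_square field_simps)
  show ?thesis unfolding amax_def tilted_argmax_def shift by (simp add: algebra_simps)
qed

theorem lemma2p1:
  fixes psi0 :: "real \<Rightarrow> real"
  assumes "cadlag psi0"
    and "((\<lambda>x. psi0 x / x\<^sup>2) \<longlongrightarrow> 0) at_infinity"
  shows "stieltjes_support (cbar psi0) \<subseteq> shock_structure psi0
    \<and> range (amax psi0) \<subseteq> stieltjes_support (cbar psi0)
    \<and> (closed (range (amax psi0)) \<longrightarrow> stieltjes_support (cbar psi0) = shock_structure psi0)"
proof -
  define g where "g = (\<lambda>z. usc_version psi0 z - z\<^sup>2 / 2)"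
  have "upper_semicontinuous g"
    using upper_semicontinuous_add_continuous[OF upper_semicontinuous_usc_version[OF assms(1)], of "\<lambda>z. - (z\<^sup>2 / 2)"]
    unfolding g_def by (simp add: continuous_intros)
  moreover have "has_quadratic_decay g"
    unfolding g_def by (rule has_quadratic_decay_usc_version[OF assms])
  moreover have "cbar psi0 = right_deriv (concave_majorant g)"
    unfolding cbar_def Cbar_def g_def ..
  moreover have "amax psi0 = (\<lambda>x. Sup (tilted_argmax g x))"
    unfolding g_def by (intro ext amax_eq_Sup_tilted_argmax)
  ultimately have "stieltjes_support (cbar psi0) \<subseteq> shock_structure psi0"
    and "range (amax psi0) \<subseteq> stieltjes_support (cbar psi0)"
    unfolding shock_structure_def
    using stieltjes_support_right_deriv_concave_majorant_subset Sup_tilted_argmax_in_stieltjes_support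
    by auto
  then show ?thesis
    unfolding shock_structure_def by (auto simp: closure_closed)
qed

end
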